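(* Let $t_0<\beta\le+\infty$, $J=[t_0,\beta[$, let $D\subset\mathbb{R}^n$ be an open set, let $m\ge 1$, and let $f\colon J\times D^m\to\mathbb{R}^n$ be continuous. Suppose there is a continuous function $k\colon J\to\mathbb{R}$ such that \[ \|F(t,z)-F(t,z')\|\le k(t)\,\|z-z'\|\qquad (t\in J,\ z,z'\in D^m), \] where $F(t,(z_1,\dots,z_m))=f(t,z_1,\dots,z_m)$. Let $g_1,\dots,g_m\colon J\to\mathbb{R}$ be continuous functions such that, for some real number $\gamma\le t_0$, $\gamma\le g_j(t)\le t$ for all $t\in J$ and all $j=1,\dots,m$. Let $\theta\colon[\gamma,t_0]\to D$ be a continuous initial function. Then for every $\beta_1$ with $t_0<\beta_1\le\beta$, the problem \[ x'(t)=f\big(t,x(g_1(t)),\dots,x(g_m(t))\big)\quad (t\in[t_0,\beta_1[),\qquad x(t)=\theta(t)\quad(t\in[\gamma,t_0]) \] has at most one solution on $[\gamma,\beta_1[$.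
   Context: A solution of the problem on $[\gamma,\beta_1[$ is a continuous function $x\colon[\gamma,\beta_1[\to D$ that is differentiable on $[t_0,\beta_1[$ (one-sided at $t_0$), satisfies $x'(t)=f(t,x(g_1(t)),\dots,x(g_m(t)))$ for all $t\in[t_0,\beta_1[$, and satisfies $x(t)=\theta(t)$ for all $t\in[\gamma,t_0]$. The norm $\|\cdot\|$ on $\mathbb{R}^n$ is a fixed norm, and on $D^m\subset(\mathbb{R}^n)^m$ the norm is $\|(z_1,\dots,z_m)\|=\max_{1\le j\le m}\|z_j\|$. *)

theory Defs
  imports "HOL-Analysis.Analysis"
begin

definition is_norm_fun :: "('a::real_vector \<Rightarrow> real) \<Rightarrow> bool" where
  "is_norm_fun N \<longleftrightarrow>
     (\<forall>x. N x \<ge> 0) \<and> (\<forall>x. N x = 0 \<longleftrightarrow> x = 0) \<and>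
     (\<forall>c x. N (c *\<^sub>R x) = \<bar>c\<bar> * N x) \<and> (\<forall>x y. N (x + y) \<le> N x + N y)"

text \<open>Max-norm on D^m induced by N; the index set of the m delays is a finite type 'm.\<close>
definition max_norm :: "('a \<Rightarrow> real) \<Rightarrow> ('m::finite \<Rightarrow> 'a) \<Rightarrow> real" where
  "max_norm N z = Max (range (\<lambda>j. N (z j)))"

definition ico_e :: "real \<Rightarrow> ereal \<Rightarrow> real set" where
  "ico_e a b = {t. a \<le> t \<and> ereal t < b}"

definition is_solution ::
  "(real \<Rightarrow> ('m::finite \<Rightarrow> 'a::real_normed_vector) \<Rightarrow> 'a) \<Rightarrow> ('m \<Rightarrow> real \<Rightarrow> real) \<Rightarrow>
   (real \<Rightarrow> 'a) \<Rightarrow> 'a set \<Rightarrow> real \<Rightarrow> real \<Rightarrow> ereal \<Rightarrow> (real \<Rightarrow> 'a) \<Rightarrow> bool" where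
  "is_solution f g \<theta> D \<gamma> t0 \<beta>1 x \<longleftrightarrow>
     continuous_on ({\<gamma>..t0} \<union> ico_e t0 \<beta>1) x \<and>
     (\<forall>t \<in> {\<gamma>..t0} \<union> ico_e t0 \<beta>1. x t \<in> D) \<and>
     (\<forall>t \<in> ico_e t0 \<beta>1.
        (x has_vector_derivative f t (\<lambda>j. x (g j t))) (at t within ico_e t0 \<beta>1)) \<and>
     (\<forall>t \<in> {\<gamma>..t0}. x t = \<theta> t)"

end

theory Submission
  imports Defs
begin

text \<open>The difference w = x - y of two solutions vanishes on [\<gamma>, t0], and on a compact interval
  [t0, t1] its derivative satisfies the retarded estimate |w'(t)| \<le> L sup {|w u| | \<gamma> \<le> u \<le> t},
  since k is bounded there and N is equivalent to the Euclidean norm. If w vanishes up to s, the mean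
  value inequality on [s, s + h] gives max |w| \<le> L h max |w| there, so w vanishes up to s + h whenever
  L h < 1; finitely many such steps exhaust [t0, t1].\<close>

lemma
  assumes "is_norm_fun N"
  shows is_norm_fun_nonneg: "0 \<le> N x"
    and is_norm_fun_eq_0_iff: "N x = 0 \<longleftrightarrow> x = 0"
    and is_norm_fun_scaleR: "N (c *\<^sub>R x) = \<bar>c\<bar> * N x"
    and is_norm_fun_triangle: "N (x + y) \<le> N x + N y"
  using assms by (auto simp: is_norm_fun_def)

lemma is_norm_fun_sum:
  assumes "is_norm_fun N" "finite A"
  shows "N (sum f A) \<le> (\<Sum>a\<in>A. N (f a))"
  using assms(2)
proof (induction A rule: finite_induct)
  case empty
  then show ?case using is_norm_fun_eq_0_iff[OF assms(1), of 0] by simp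
next
  case (insert a A)
  have "N (sum f (insert a A)) = N (f a + sum f A)" using insert by simp
  also have "\<dots> \<le> N (f a) + N (sum f A)" by (rule is_norm_fun_triangle[OF assms(1)])
  also have "\<dots> \<le> N (f a) + (\<Sum>a\<in>A. N (f a))" using insert by simp
  also have "\<dots> = (\<Sum>a\<in>insert a A. N (f a))" using insert by simp
  finally show ?case .
qed

lemma is_norm_fun_le_norm:
  fixes N :: "'a::euclidean_space \<Rightarrow> real"
  assumes "is_norm_fun N"
  shows "\<exists>C>0. \<forall>v. N v \<le> C * norm v"
proof (intro exI conjI allI)
  let ?C = "(\<Sum>b\<in>Basis. N b) + 1"
  note N0 = is_norm_fun_nonneg[OF assms]
  show "?C > 0" using N0 by (simp add: add_nonneg_pos sum_nonneg)
  fix v :: 'a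
  have "N v = N (\<Sum>b\<in>Basis. (v \<bullet> b) *\<^sub>R b)" by (simp add: euclidean_representation)
  also have "\<dots> \<le> (\<Sum>b\<in>Basis. N ((v \<bullet> b) *\<^sub>R b))" by (rule is_norm_fun_sum[OF assms]) simp
  also have "\<dots> \<le> (\<Sum>b\<in>Basis. norm v * N b)"
    by (intro sum_mono) (auto simp: is_norm_fun_scaleR[OF assms] Basis_le_norm N0 intro: mult_right_mono)
  also have "\<dots> \<le> ?C * norm v" by (simp add: sum_distrib_left algebra_simps)
  finally show "N v \<le> ?C * norm v" .
qed

lemma is_norm_fun_ge_norm:
  fixes N :: "'a::euclidean_space \<Rightarrow> real"
  assumes "is_norm_fun N"
  shows "\<exists>c>0. \<forall>v. c * norm v \<le> N v"
proof -
  obtain C where "C > 0" and C: "\<forall>v. N v \<le> C * norm v" using is_norm_fun_le_norm[OF assms] by blast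
  note N0 = is_norm_fun_nonneg[OF assms] and N_eq_0 = is_norm_fun_eq_0_iff[OF assms]
    and hom = is_norm_fun_scaleR[OF assms] and tri = is_norm_fun_triangle[OF assms]
  have "C-lipschitz_on UNIV N"
  proof (rule lipschitz_onI)
    fix v w :: 'a
    have "N v \<le> N (v - w) + N w" "N w \<le> N (w - v) + N v"
      using tri[of "v - w" w] tri[of "w - v" v] by simp_all
    moreover have "N (w - v) = N (v - w)" using hom[of "-1" "v - w"] by simp
    ultimately show "dist (N v) (N w) \<le> C * dist v w"
      using C[rule_format, of "v - w"] by (simp add: dist_real_def dist_norm abs_le_iff)
    show "0 \<le> C" using \<open>C > 0\<close> by simp
  qed
  then have "continuous_on (sphere 0 1) N"
    by (rule continuous_on_subset[OF lipschitz_on_continuous_on]) simp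
  moreover have "sphere (0::'a) 1 \<noteq> {}"
    using norm_Basis[OF SOME_Basis] by force
  ultimately obtain v0 where v0: "norm v0 = 1" "\<And>v. norm v = 1 \<Longrightarrow> N v0 \<le> N v"
    using continuous_attains_inf[OF compact_sphere, of 0 1 N] by auto
  have "N v0 > 0" using v0(1) N0[of v0] N_eq_0[of v0] by fastforce
  moreover have "N v0 * norm v \<le> N v" for v
  proof (cases "v = 0")
    case False
    then have "N v0 \<le> N (v /\<^sub>R norm v)" by (intro v0(2)) simp
    with False show ?thesis by (simp add: hom field_simps)
  qed (simp add: N0)
  ultimately show ?thesis by blast
qed

lemma max_norm_le_iff: "max_norm N z \<le> B \<longleftrightarrow> (\<forall>j. N (z j) \<le> B)"
  unfolding max_norm_def by (subst Max_le_iff) auto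

lemma is_norm_fun_max_norm_bound:
  fixes N :: "'a::euclidean_space \<Rightarrow> real"
  assumes "is_norm_fun N"
  shows "\<exists>C. \<forall>v (z :: 'm::finite \<Rightarrow> 'a) K B. N v \<le> K * max_norm N z \<longrightarrow> 0 \<le> K \<longrightarrow>
           (\<forall>j. norm (z j) \<le> B) \<longrightarrow> norm v \<le> C * K * B"
proof -
  obtain c where "c > 0" and c: "\<And>v. c * norm v \<le> N v"
    using is_norm_fun_ge_norm[OF assms] by blast
  obtain C where "C > 0" and C: "\<And>v. N v \<le> C * norm v"
    using is_norm_fun_le_norm[OF assms] by blast
  have "norm v \<le> C / c * K * B"
    if v: "N v \<le> K * max_norm N z" and "0 \<le> K" and z: "\<forall>j. norm (z j) \<le> B" for v and z :: "'m \<Rightarrow> 'a" and K B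
  proof -
    have "max_norm N z \<le> C * B"
      unfolding max_norm_le_iff using C z \<open>C > 0\<close> by (meson mult_left_mono less_imp_le order_trans)
    then have "c * norm v \<le> K * (C * B)"
      using c[of v] v \<open>0 \<le> K\<close> by (meson mult_left_mono order_trans)
    then show ?thesis
      using \<open>c > 0\<close> by (simp add: field_simps)
  qed
  then show ?thesis by blast
qed

lemma max_norm_nonneg: "is_norm_fun N \<Longrightarrow> 0 \<le> max_norm N z"
  unfolding max_norm_def by (rule order_trans[OF is_norm_fun_nonneg Max_ge]) auto

lemma vector_derivative_bound_Icc:
  fixes w :: "real \<Rightarrow> 'a::real_normed_vector"
  assumes "\<And>t. t \<in> {a..b} \<Longrightarrow> (w has_vector_derivative w' t) (at t within {a..b})"
    and "\<And>t. t \<in> {a..b} \<Longrightarrow> norm (w' t) \<le> B"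
    and "u \<in> {a..b}" "v \<in> {a..b}"
  shows "norm (w u - w v) \<le> B * \<bar>u - v\<bar>"
proof -
  have "onorm (\<lambda>r. r *\<^sub>R w' t) \<le> B" if "t \<in> {a..b}" for t
    using assms(2)[OF that] by (simp add: onorm_scaleR_left onorm_id)
  then show ?thesis
    using differentiable_bound[of "{a..b}" w "\<lambda>t r. r *\<^sub>R w' t" B u v] assms
    by (simp add: has_vector_derivative_def)
qed

lemma retarded_zero_extend:
  fixes w :: "real \<Rightarrow> 'a::real_normed_vector"
  assumes "\<gamma> \<le> s" "s \<le> s'" "L * (s' - s) < 1"
    and cont: "continuous_on {s..s'} w"
    and deriv: "\<And>t. t \<in> {s..s'} \<Longrightarrow> (w has_vector_derivative w' t) (at t within {s..s'})"
    and bound: "\<And>t B. t \<in> {s..s'} \<Longrightarrow> (\<And>u. u \<in> {\<gamma>..t} \<Longrightarrow> norm (w u) \<le> B) \<Longrightarrow>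
                  norm (w' t) \<le> L * B"
    and past: "\<And>u. u \<in> {\<gamma>..s} \<Longrightarrow> w u = 0"
  shows "u \<in> {\<gamma>..s'} \<Longrightarrow> w u = 0"
proof -
  obtain u0 where u0: "u0 \<in> {s..s'}" and max: "\<And>u. u \<in> {s..s'} \<Longrightarrow> norm (w u) \<le> norm (w u0)"
    using continuous_attains_sup[OF compact_Icc _ continuous_on_norm[OF cont]] \<open>s \<le> s'\<close> by auto
  define M where "M = norm (w u0)"
  have below_M: "norm (w u) \<le> M" if "u \<in> {\<gamma>..s'}" for u
    using past max that by (cases "u \<le> s") (auto simp: M_def)
  have w'_bound: "norm (w' t) \<le> L * M" if "t \<in> {s..s'}" for t
    using that by (intro bound below_M) (use \<open>\<gamma> \<le> s\<close> in auto)
  have "M = norm (w u0 - w s)" using past \<open>\<gamma> \<le> s\<close> by (simp add: M_def)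
  also have "\<dots> \<le> L * M * \<bar>u0 - s\<bar>"
    using u0 \<open>s \<le> s'\<close> by (intro vector_derivative_bound_Icc[OF deriv w'_bound]) auto
  also have "\<dots> \<le> L * M * (s' - s)"
    using u0 w'_bound[of s] \<open>s \<le> s'\<close> by (intro mult_left_mono) (auto intro: order_trans[OF norm_ge_zero])
  finally have "(1 - L * (s' - s)) * M \<le> 0" by (simp add: algebra_simps)
  then have "M = 0"
    using \<open>L * (s' - s) < 1\<close> by (simp add: M_def mult_le_0_iff)
  then show "u \<in> {\<gamma>..s'} \<Longrightarrow> w u = 0"
    using below_M by fastforce
qed

lemma retarded_derivative_bound_imp_zero:
  fixes w :: "real \<Rightarrow> 'a::real_normed_vector"
  assumes "\<gamma> \<le> a" "a \<le> b"
    and cont: "continuous_on {a..b} w"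
    and deriv: "\<And>t. t \<in> {a..b} \<Longrightarrow> (w has_vector_derivative w' t) (at t within {a..b})"
    and bound: "\<And>t B. t \<in> {a..b} \<Longrightarrow> (\<And>u. u \<in> {\<gamma>..t} \<Longrightarrow> norm (w u) \<le> B) \<Longrightarrow>
                  norm (w' t) \<le> L * B"
    and initial: "\<And>u. u \<in> {\<gamma>..a} \<Longrightarrow> w u = 0"
  shows "u \<in> {\<gamma>..b} \<Longrightarrow> w u = 0"
proof -
  define h where "h = 1 / (\<bar>L\<bar> + 1)"
  have "h > 0" and "\<bar>L\<bar> * h < 1" by (auto simp: h_def field_simps)
  define s where "s n = min b (a + real n * h)" for n
  have "\<forall>u\<in>{\<gamma>..s n}. w u = 0" for n
  proof (induction n)
    case 0
    then show ?case using initial by (simp add: s_def)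
  next
    case (Suc n)
    have "s n \<le> s (Suc n)" using \<open>h > 0\<close> by (simp add: s_def min_le_iff_disj algebra_simps)
    have sub: "{s n..s (Suc n)} \<subseteq> {a..b}"
      using \<open>a \<le> b\<close> \<open>h > 0\<close> by (auto simp: s_def)
    have "s (Suc n) - s n \<le> h" using \<open>h > 0\<close> by (auto simp: s_def min_def algebra_simps)
    then have "L * (s (Suc n) - s n) \<le> \<bar>L\<bar> * h"
      using \<open>s n \<le> s (Suc n)\<close> by (metis abs_ge_self abs_ge_zero diff_ge_0_iff_ge mult_mono)
    show ?case
    proof
      fix u assume u: "u \<in> {\<gamma>..s (Suc n)}"
      show "w u = 0"
      proof (rule retarded_zero_extend[OF _ \<open>s n \<le> s (Suc n)\<close> _ continuous_on_subset[OF cont sub]])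
        show "\<gamma> \<le> s n" using assms(1,2) \<open>h > 0\<close> by (simp add: s_def add_increasing2)
        show "L * (s (Suc n) - s n) < 1" using \<open>L * _ \<le> _\<close> \<open>\<bar>L\<bar> * h < 1\<close> by linarith
        show "(w has_vector_derivative w' t) (at t within {s n..s (Suc n)})"
          if "t \<in> {s n..s (Suc n)}" for t
          using has_vector_derivative_within_subset[OF deriv sub] sub that by blast
        show "norm (w' t) \<le> L * B"
          if "t \<in> {s n..s (Suc n)}" "\<And>u. u \<in> {\<gamma>..t} \<Longrightarrow> norm (w u) \<le> B" for t B
          using bound sub that by blast
      qed (use Suc.IH u in blast)+
    qed
  qed
  moreover obtain n where "(b - a) / h \<le> real n" using real_arch_simple by blast
  then have "s n = b" using \<open>h > 0\<close> by (simp add: s_def field_simps)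
  ultimately show "u \<in> {\<gamma>..b} \<Longrightarrow> w u = 0" by metis
qed

lemma delay_ivp_unique_Icc:
  fixes f :: "real \<Rightarrow> ('m::finite \<Rightarrow> 'a::euclidean_space) \<Rightarrow> 'a"
  assumes "is_norm_fun N" "\<gamma> \<le> t0" "t0 \<le> t1" "continuous_on {t0..t1} k"
    and lip: "\<And>t z z'. t \<in> {t0..t1} \<Longrightarrow> \<forall>j. z j \<in> D \<Longrightarrow> \<forall>j. z' j \<in> D \<Longrightarrow>
                N (f t z - f t z') \<le> k t * max_norm N (\<lambda>j. z j - z' j)"
    and delay: "\<And>j t. t \<in> {t0..t1} \<Longrightarrow> \<gamma> \<le> g j t \<and> g j t \<le> t"
    and x: "continuous_on {\<gamma>..t1} x" "x ` {\<gamma>..t1} \<subseteq> D"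
      "\<And>t. t \<in> {t0..t1} \<Longrightarrow> (x has_vector_derivative f t (\<lambda>j. x (g j t))) (at t within {t0..t1})"
    and y: "continuous_on {\<gamma>..t1} y" "y ` {\<gamma>..t1} \<subseteq> D"
      "\<And>t. t \<in> {t0..t1} \<Longrightarrow> (y has_vector_derivative f t (\<lambda>j. y (g j t))) (at t within {t0..t1})"
    and initial: "\<And>t. t \<in> {\<gamma>..t0} \<Longrightarrow> x t = y t"
  shows "t \<in> {\<gamma>..t1} \<Longrightarrow> x t = y t"
proof -
  have "compact (k ` {t0..t1})" by (rule compact_continuous_image[OF assms(4) compact_Icc])
  then obtain K where "\<forall>v \<in> k ` {t0..t1}. norm v \<le> K"
    using compact_imp_bounded bounded_iff by metis
  then have K: "\<And>t. t \<in> {t0..t1} \<Longrightarrow> \<bar>k t\<bar> \<le> K" by simp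
  then have "0 \<le> K" using K[of t0] \<open>t0 \<le> t1\<close> by force
  obtain C where C: "\<forall>v (z :: 'm \<Rightarrow> 'a) L B. N v \<le> L * max_norm N z \<longrightarrow> 0 \<le> L \<longrightarrow>
      (\<forall>j. norm (z j) \<le> B) \<longrightarrow> norm v \<le> C * L * B"
    using is_norm_fun_max_norm_bound[OF assms(1)] by blast
  have "continuous_on {\<gamma>..t1} (\<lambda>t. x t - y t)" using x y by (intro continuous_on_diff)
  then have cont: "continuous_on {t0..t1} (\<lambda>t. x t - y t)"
    by (rule continuous_on_subset) (use \<open>\<gamma> \<le> t0\<close> in auto)
  have deriv: "((\<lambda>t. x t - y t) has_vector_derivative
      f t (\<lambda>j. x (g j t)) - f t (\<lambda>j. y (g j t))) (at t within {t0..t1})" if "t \<in> {t0..t1}" for t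
    using x(3)[OF that] y(3)[OF that] by (rule has_vector_derivative_diff)
  have bound: "norm (f t (\<lambda>j. x (g j t)) - f t (\<lambda>j. y (g j t))) \<le> C * K * B"
    if "t \<in> {t0..t1}" and B: "\<And>u. u \<in> {\<gamma>..t} \<Longrightarrow> norm (x u - y u) \<le> B" for t B
  proof -
    have g: "g j t \<in> {\<gamma>..t}" for j using delay[OF that(1)] by simp
    then have "\<forall>j. x (g j t) \<in> D" "\<forall>j. y (g j t) \<in> D"
      using x(2) y(2) that(1) by force+
    then have "N (f t (\<lambda>j. x (g j t)) - f t (\<lambda>j. y (g j t)))
        \<le> k t * max_norm N (\<lambda>j. x (g j t) - y (g j t))"
      by (rule lip[OF that(1)])
    also have "\<dots> \<le> K * max_norm N (\<lambda>j. x (g j t) - y (g j t))"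
      using K[OF that(1)] max_norm_nonneg[OF assms(1)] by (intro mult_right_mono) auto
    finally show ?thesis
      by (rule C[rule_format, OF _ \<open>0 \<le> K\<close>]) (use B g in auto)
  qed
  have "\<And>t. t \<in> {\<gamma>..t0} \<Longrightarrow> x t - y t = 0" using initial by simp
  from retarded_derivative_bound_imp_zero[OF \<open>\<gamma> \<le> t0\<close> \<open>t0 \<le> t1\<close> cont deriv bound this]
  show "t \<in> {\<gamma>..t1} \<Longrightarrow> x t = y t" by simp
qed

lemma ico_e_mono: "\<beta>1 \<le> \<beta> \<Longrightarrow> ico_e t0 \<beta>1 \<subseteq> ico_e t0 \<beta>"
  by (auto simp: ico_e_def intro: less_le_trans)

lemma Icc_subset_ico_e:
  assumes "ereal t1 < \<beta>"
  shows "{t0..t1} \<subseteq> ico_e t0 \<beta>" and "{\<gamma>..t1} \<subseteq> {\<gamma>..t0} \<union> ico_e t0 \<beta>"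
proof -
  have "ereal t < \<beta>" if "t \<le> t1" for t
    using that assms by (meson ereal_less_eq(3) le_less_trans)
  then show "{t0..t1} \<subseteq> ico_e t0 \<beta>" "{\<gamma>..t1} \<subseteq> {\<gamma>..t0} \<union> ico_e t0 \<beta>"
    by (auto simp: ico_e_def)
qed

lemma is_solution_restrict_Icc:
  assumes "is_solution f g \<theta> D \<gamma> t0 \<beta>1 x" "ereal t1 < \<beta>1"
  shows "continuous_on {\<gamma>..t1} x" "x ` {\<gamma>..t1} \<subseteq> D"
    and "\<And>t. t \<in> {t0..t1} \<Longrightarrow> (x has_vector_derivative f t (\<lambda>j. x (g j t))) (at t within {t0..t1})"
    and "\<And>t. t \<in> {\<gamma>..t0} \<Longrightarrow> x t = \<theta> t"
proof -
  note x = assms(1)[unfolded is_solution_def]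
  note sub = Icc_subset_ico_e[OF assms(2)]
  show "continuous_on {\<gamma>..t1} x" using continuous_on_subset[OF _ sub(2)] x by blast
  show "x ` {\<gamma>..t1} \<subseteq> D" using x sub(2) by blast
  show "(x has_vector_derivative f t (\<lambda>j. x (g j t))) (at t within {t0..t1})" if "t \<in> {t0..t1}" for t
    using has_vector_derivative_within_subset[OF _ sub(1)] x that sub(1) by blast
  show "x t = \<theta> t" if "t \<in> {\<gamma>..t0}" for t using x that by blast
qed

theorem mainTheorem1:
  fixes f :: "real \<Rightarrow> ('m::finite \<Rightarrow> 'a::euclidean_space) \<Rightarrow> 'a"
    and N :: "'a \<Rightarrow> real"
    and k :: "real \<Rightarrow> real"
    and g :: "'m \<Rightarrow> real \<Rightarrow> real"
    and \<theta> :: "real \<Rightarrow> 'a"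
    and D :: "'a set"
    and t0 \<gamma> :: real
    and \<beta> \<beta>1 :: ereal
  assumes "is_norm_fun N"
    and "ereal t0 < \<beta>"
    and "open D"
    and "continuous_on (ico_e t0 \<beta> \<times> {z. \<forall>j. z j \<in> D}) (\<lambda>(t, z). f t z)"
    and "continuous_on (ico_e t0 \<beta>) k"
    and "\<And>t z z'. t \<in> ico_e t0 \<beta> \<Longrightarrow> (\<forall>j. z j \<in> D) \<Longrightarrow> (\<forall>j. z' j \<in> D) \<Longrightarrow>
           N (f t z - f t z') \<le> k t * max_norm N (\<lambda>j. z j - z' j)"
    and "\<And>j. continuous_on (ico_e t0 \<beta>) (g j)"
    and "\<gamma> \<le> t0"
    and "\<And>j t. t \<in> ico_e t0 \<beta> \<Longrightarrow> \<gamma> \<le> g j t \<and> g j t \<le> t"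
    and "continuous_on {\<gamma>..t0} \<theta>"
    and "\<theta> ` {\<gamma>..t0} \<subseteq> D"
    and "ereal t0 < \<beta>1" and "\<beta>1 \<le> \<beta>"
    and "is_solution f g \<theta> D \<gamma> t0 \<beta>1 x"
    and "is_solution f g \<theta> D \<gamma> t0 \<beta>1 y"
  shows "\<forall>t \<in> {\<gamma>..t0} \<union> ico_e t0 \<beta>1. x t = y t"
proof
  fix t1 assume t1: "t1 \<in> {\<gamma>..t0} \<union> ico_e t0 \<beta>1"
  note x = is_solution_restrict_Icc[OF assms(14)] and y = is_solution_restrict_Icc[OF assms(15)]
  show "x t1 = y t1"
  proof (cases "t1 \<le> t0")
    case True
    with t1 have "t1 \<in> {\<gamma>..t0}" using \<open>\<gamma> \<le> t0\<close> by (auto simp: ico_e_def)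
    then show ?thesis using x(4) y(4) \<open>ereal t0 < \<beta>1\<close> by simp
  next
    case False
    with t1 have "ereal t1 < \<beta>1" "t0 \<le> t1" by (auto simp: ico_e_def)
    have sub: "{t0..t1} \<subseteq> ico_e t0 \<beta>"
      using Icc_subset_ico_e(1)[OF \<open>ereal t1 < \<beta>1\<close>] ico_e_mono[OF \<open>\<beta>1 \<le> \<beta>\<close>] by blast
    show ?thesis
    proof (rule delay_ivp_unique_Icc[OF assms(1) \<open>\<gamma> \<le> t0\<close> \<open>t0 \<le> t1\<close> continuous_on_subset[OF assms(5) sub]
          _ _ x(1-3)[OF \<open>ereal t1 < \<beta>1\<close>] y(1-3)[OF \<open>ereal t1 < \<beta>1\<close>]])
      show "N (f t z - f t z') \<le> k t * max_norm N (\<lambda>j. z j - z' j)"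
        if "t \<in> {t0..t1}" "\<forall>j. z j \<in> D" "\<forall>j. z' j \<in> D" for t z z'
        using assms(6) that sub by blast
      show "\<gamma> \<le> g j t \<and> g j t \<le> t" if "t \<in> {t0..t1}" for j t
        using assms(9) that sub by blast
      show "x t = y t" if "t \<in> {\<gamma>..t0}" for t
        using x(4) y(4) that \<open>ereal t0 < \<beta>1\<close> by simp
    qed (use \<open>\<gamma> \<le> t0\<close> \<open>t0 \<le> t1\<close> in auto)
  qed
qed

end
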